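(* Let $\mathbf X\in\mathbb R^{m\times n}$, let $\mathbf Y\in\mathbb R^{q\times n}$ satisfy $\mathbf Y^T\mathbf Y=\mathbf I_n$, and let $\lambda>0$. If $\widehat{\mathbf B}$ is the optimal solution of $\min_{\mathbf B\in\mathbb R^{m\times q}}\{\frac12\|\mathbf X-\mathbf B\mathbf Y\|_F^2+\lambda\|\mathbf B\|_*\}$ and $\widehat{\mathbf S}$ is the optimal solution of $\min_{\mathbf S\in\mathbb R^{m\times n}}\{\frac12\|\mathbf X-\mathbf S\|_F^2+\lambda\|\mathbf S\|_*\}$, then $\widehat{\mathbf S}=\widehat{\mathbf B}\mathbf Y$.
   Context: $\|\cdot\|_*$ is the nuclear norm (sum of singular values), $\|\cdot\|_F$ the Frobenius norm. *)

theory Defs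
  imports Complex_Main "Jordan_Normal_Form.Char_Poly"
begin

definition frob_norm :: "real mat \<Rightarrow> real" where
  "frob_norm A = sqrt (\<Sum>i<dim_row A. \<Sum>j<dim_col A. (A $$ (i,j))^2)"

text \<open>Singular values of A (with multiplicity) are the square roots of the eigenvalues
  of A^T A, i.e. of the roots (with multiplicity) of its characteristic polynomial.
  The nuclear norm is their sum.\<close>
definition nuclear_norm :: "real mat \<Rightarrow> real" where
  "nuclear_norm A =
     (let p = char_poly (transpose_mat A * A)
      in \<Sum>x\<in>{x. poly p x = 0}. of_nat (order x p) * sqrt x)"

end

(*
  The nuclear norm is dual to the operator norm: ||A||_* = max { <W, A> : W a contraction },
  the maximum being attained at W = (A U) D^(-1/2) U^T (zero entries of D kept at zero) when
  U^T (A^T A) U = D is an orthogonal diagonalisation, which exists by the spectral theorem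
  for real symmetric matrices (proved by Householder deflation).  Hence ||.||_* is convex and
  ||A Y||_* <= ||A||_* for every contraction Y.

  If Y^T Y = I then both Y and Y^T are contractions, so with
  g(S) = 1/2 ||X - S||_F^2 + lam ||S||_* and any S, the optimality of B_hat gives
    g(B_hat Y) <= 1/2 ||X - B_hat Y||_F^2 + lam ||B_hat||_*
              <= 1/2 ||X - (S Y^T) Y||_F^2 + lam ||S Y^T||_* <= g(S).
  Thus B_hat Y minimises g, and g has only one minimiser because the squared Frobenius
  distance makes it strictly convex.
*)

theory Submission
  imports Defs "HOL-Analysis.L2_Norm"
begin

section \<open>Contractions\<close>

lemma scalar_prod_cauchy_schwarz:
  fixes x y :: "real vec"
  assumes "x \<in> carrier_vec n" and "y \<in> carrier_vec n"
  shows "x \<bullet> y \<le> sqrt (x \<bullet> x) * sqrt (y \<bullet> y)"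
proof -
  have sq: "v \<bullet> v = (\<Sum>i\<in>{0..<n}. (v $ i)\<^sup>2)" if "v \<in> carrier_vec n" for v :: "real vec"
    using that by (simp add: scalar_prod_def power2_eq_square)
  have "x \<bullet> y \<le> (\<Sum>i\<in>{0..<n}. \<bar>x $ i\<bar> * \<bar>y $ i\<bar>)"
    using assms by (auto simp: scalar_prod_def abs_mult[symmetric] intro!: sum_mono)
  also have "\<dots> \<le> L2_set (($) x) {0..<n} * L2_set (($) y) {0..<n}"
    by (rule L2_set_mult_ineq)
  finally show ?thesis
    using assms by (simp add: L2_set_def sq)
qed

lemma scalar_prod_self_nonneg: "0 \<le> (v :: real vec) \<bullet> v"
  using conjugate_square_ge_0_vec[of v] by simp

lemma scalar_prod_self_pos:
  "(v :: real vec) \<in> carrier_vec n \<Longrightarrow> v \<noteq> 0\<^sub>v n \<Longrightarrow> 0 < v \<bullet> v"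
  using conjugate_square_greater_0_vec[of v n] by simp

definition contraction_mat :: "real mat \<Rightarrow> bool" where
  "contraction_mat W \<longleftrightarrow> (\<forall>x \<in> carrier_vec (dim_col W). (W *\<^sub>v x) \<bullet> (W *\<^sub>v x) \<le> x \<bullet> x)"

lemma contraction_matD:
  "contraction_mat W \<Longrightarrow> x \<in> carrier_vec (dim_col W) \<Longrightarrow> (W *\<^sub>v x) \<bullet> (W *\<^sub>v x) \<le> x \<bullet> x"
  unfolding contraction_mat_def by blast

lemma contraction_mat_mult:
  assumes A: "A \<in> carrier_mat m k" and B: "B \<in> carrier_mat k n"
    and "contraction_mat A" and "contraction_mat B"
  shows "contraction_mat (A * B)"
  unfolding contraction_mat_def
proof
  fix x :: "real vec" assume "x \<in> carrier_vec (dim_col (A * B))"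
  hence x: "x \<in> carrier_vec n" using B by simp
  have "((A * B) *\<^sub>v x) \<bullet> ((A * B) *\<^sub>v x) = (A *\<^sub>v (B *\<^sub>v x)) \<bullet> (A *\<^sub>v (B *\<^sub>v x))"
    using A B x by simp
  also have "\<dots> \<le> (B *\<^sub>v x) \<bullet> (B *\<^sub>v x)"
    using assms x by (intro contraction_matD) auto
  also have "\<dots> \<le> x \<bullet> x"
    using assms x by (intro contraction_matD) auto
  finally show "((A * B) *\<^sub>v x) \<bullet> ((A * B) *\<^sub>v x) \<le> x \<bullet> x" .
qed

lemma contraction_mat_transpose:
  assumes A: "A \<in> carrier_mat m n" and c: "contraction_mat A"
  shows "contraction_mat (transpose_mat A)"
  unfolding contraction_mat_def
proof
  fix x :: "real vec" assume "x \<in> carrier_vec (dim_col (transpose_mat A))"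
  hence x: "x \<in> carrier_vec m" using A by simp
  define z where "z = transpose_mat A *\<^sub>v x"
  have z: "z \<in> carrier_vec n" unfolding z_def using A x by simp
  have Az: "A *\<^sub>v z \<in> carrier_vec m" using A z by simp
  have "z \<bullet> z = x \<bullet> (A *\<^sub>v z)"
    unfolding z_def using transpose_vec_mult_scalar[OF A _ x] A x by (simp add: z_def[symmetric] z)
  also have "\<dots> \<le> sqrt (x \<bullet> x) * sqrt ((A *\<^sub>v z) \<bullet> (A *\<^sub>v z))"
    by (rule scalar_prod_cauchy_schwarz[OF x Az])
  also have "\<dots> \<le> sqrt (x \<bullet> x) * sqrt (z \<bullet> z)"
    using contraction_matD[OF c] A z by (auto intro!: mult_left_mono simp: scalar_prod_self_nonneg)
  finally have "sqrt (z \<bullet> z) * sqrt (z \<bullet> z) \<le> sqrt (x \<bullet> x) * sqrt (z \<bullet> z)"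
    using scalar_prod_self_nonneg[of z] by simp
  hence "sqrt (z \<bullet> z) \<le> sqrt (x \<bullet> x)"
    by (smt (verit) mult_le_cancel_right real_sqrt_ge_zero scalar_prod_self_nonneg)
  thus "z \<bullet> z \<le> x \<bullet> x" by simp
qed

section \<open>Spectral theorem for real symmetric matrices\<close>

definition orthonormal_mat :: "nat \<Rightarrow> real mat \<Rightarrow> bool" where
  "orthonormal_mat n U \<longleftrightarrow> U \<in> carrier_mat n n \<and> transpose_mat U * U = 1\<^sub>m n"

lemma orthonormal_matD:
  assumes "orthonormal_mat n U"
  shows "U \<in> carrier_mat n n" "transpose_mat U * U = 1\<^sub>m n" "U * transpose_mat U = 1\<^sub>m n"
  using assms mat_mult_left_right_inverse[of "transpose_mat U" n U]
  unfolding orthonormal_mat_def by auto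

lemma orthonormal_mat_mult:
  assumes U: "orthonormal_mat n U" and V: "orthonormal_mat n V"
  shows "orthonormal_mat n (U * V)"
proof -
  note U' = orthonormal_matD[OF U] and V' = orthonormal_matD[OF V]
  have "transpose_mat (U * V) * (U * V) = transpose_mat V * (transpose_mat U * U) * V"
    using U'(1) V'(1) by (simp add: transpose_mult assoc_mult_mat[of _ n n _ n _ n])
  thus ?thesis
    using U' V' unfolding orthonormal_mat_def by simp
qed

lemma symmetric_mat_has_eigenvalue:
  fixes M :: "real mat"
  assumes M: "M \<in> carrier_mat n n" and sym: "transpose_mat M = M" and n: "0 < n"
  shows "\<exists>e. eigenvalue M e"
proof -
  let ?Mc = "of_real_hom.mat_hom M :: complex mat"
  have Mc: "?Mc \<in> carrier_mat n n" using M by simp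
  have "degree (char_poly ?Mc) = n" using degree_monic_char_poly[OF Mc] by simp
  then obtain a where "poly (char_poly ?Mc) a = 0"
    using n fundamental_theorem_of_algebra constant_degree by (metis neq0_conv)
  then obtain w where w: "w \<in> carrier_vec n" "w \<noteq> 0\<^sub>v n" and ev: "?Mc *\<^sub>v w = a \<cdot>\<^sub>v w"
    unfolding eigenvalue_root_char_poly[OF Mc, symmetric] eigenvalue_def eigenvector_def
    using Mc by auto
  have real_entries: "conjugate (?Mc *\<^sub>v w) = ?Mc *\<^sub>v conjugate w"
    using M w by (auto simp: scalar_prod_def sum_conjugate conjugate_dist_mul intro!: eq_vecI)
  have "a * (w \<bullet>c w) = (?Mc *\<^sub>v w) \<bullet>c w"
    using w by (simp add: ev)
  also have "\<dots> = conjugate w \<bullet> (?Mc *\<^sub>v w)"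
    using w Mc by (intro comm_scalar_prod[of _ n]) auto
  also have "\<dots> = (transpose_mat ?Mc *\<^sub>v conjugate w) \<bullet> w"
    using transpose_vec_mult_scalar[OF Mc w(1), of "conjugate w"] w by simp
  also have "transpose_mat ?Mc = ?Mc"
    using sym by (metis map_mat_transpose)
  also have "?Mc *\<^sub>v conjugate w = conjugate (a \<cdot>\<^sub>v w)"
    by (simp add: real_entries[symmetric] ev)
  also have "conjugate (a \<cdot>\<^sub>v w) \<bullet> w = cnj a * (conjugate w \<bullet> w)"
    unfolding conjugate_smult_vec using w by simp
  also have "conjugate w \<bullet> w = w \<bullet>c w"
    using w by (intro comm_scalar_prod[of _ n]) auto
  finally have "a * (w \<bullet>c w) = cnj a * (w \<bullet>c w)" .
  moreover have "w \<bullet>c w \<noteq> 0"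
    using w conjugate_square_greater_0_vec[of w n] by auto
  ultimately have "a = cnj a" by simp
  hence "a = of_real (Re a)" by (simp add: complex_eq_iff)
  then obtain e where a: "a = of_real e" by blast
  have "of_real (poly (char_poly M) e) = poly (char_poly ?Mc) a"
    unfolding a of_real_hom.char_poly_hom[OF M] of_real_hom.poly_map_poly ..
  hence "poly (char_poly M) e = 0" using \<open>poly (char_poly ?Mc) a = 0\<close> by simp
  thus ?thesis using eigenvalue_root_char_poly[OF M] by blast
qed

lemma symmetric_mat_unit_eigenvector:
  fixes M :: "real mat"
  assumes M: "M \<in> carrier_mat n n" and "transpose_mat M = M" and "0 < n"
  obtains e v where "v \<in> carrier_vec n" "v \<bullet> v = 1" "M *\<^sub>v v = e \<cdot>\<^sub>v v"
proof -
  obtain e v where v: "v \<in> carrier_vec n" "v \<noteq> 0\<^sub>v n" and ev: "M *\<^sub>v v = e \<cdot>\<^sub>v v"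
    using symmetric_mat_has_eigenvalue[OF assms] M unfolding eigenvalue_def eigenvector_def by auto
  define u where "u = (1 / sqrt (v \<bullet> v)) \<cdot>\<^sub>v v"
  have pos: "0 < v \<bullet> v" by (rule scalar_prod_self_pos[OF v])
  have "u \<in> carrier_vec n" unfolding u_def using v by simp
  moreover have "u \<bullet> u = 1"
    unfolding u_def using v pos by simp
  moreover have "M *\<^sub>v u = e \<cdot>\<^sub>v u"
    unfolding u_def using v M ev by (simp add: mult_mat_vec smult_smult_assoc mult.commute)
  ultimately show ?thesis using that by blast
qed

(* for w = 0 the junk value 2 / 0 = 0 makes this the identity *)
definition householder_mat :: "nat \<Rightarrow> real vec \<Rightarrow> real mat" where
  "householder_mat n w = mat n n (\<lambda>(i,j). (if i = j then 1 else 0) - 2 / (w \<bullet> w) * w $ i * w $ j)"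

lemma householder_mat_orthonormal:
  assumes w: "w \<in> carrier_vec n"
  shows "orthonormal_mat n (householder_mat n w)"
proof -
  define c where "c = 2 / (w \<bullet> w)"
  have cc: "c * c * (w \<bullet> w) = 2 * c"
    unfolding c_def by (cases "w \<bullet> w = 0") (simp_all add: field_simps power2_eq_square)
  let ?H = "householder_mat n w"
  have H: "?H \<in> carrier_mat n n" unfolding householder_mat_def by simp
  have "transpose_mat ?H * ?H = 1\<^sub>m n"
  proof (rule eq_matI)
    fix i j assume "i < dim_row (1\<^sub>m n)" "j < dim_col (1\<^sub>m n)"
    hence i: "i < n" and j: "j < n" by auto
    have "(transpose_mat ?H * ?H) $$ (i,j) = (\<Sum>k\<in>{0..<n}. ?H $$ (k,i) * ?H $$ (k,j))"
      using i j H by (simp add: scalar_prod_def)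
    also have "\<dots> = (\<Sum>k\<in>{0..<n}. (if k = i then (if i = j then 1 else 0) - c * w $ i * w $ j else 0)
         - c * w $ i * (if k = j then w $ j else 0) + c * c * (w $ i * w $ j) * (w $ k * w $ k))"
      unfolding householder_mat_def c_def[symmetric] using i j
      by (intro sum.cong) (auto simp: algebra_simps)
    also have "\<dots> = (if i = j then 1 else 0) - 2 * c * w $ i * w $ j + c * c * (w $ i * w $ j) * (w \<bullet> w)"
      using i j w by (simp add: sum.distrib sum_subtractf sum_distrib_left[symmetric] scalar_prod_def)
    also have "c * c * (w $ i * w $ j) * (w \<bullet> w) = 2 * c * w $ i * w $ j"
      by (metis cc mult.commute mult.assoc)
    also have "(if i = j then 1 else 0) - 2 * c * w $ i * w $ j + 2 * c * w $ i * w $ j = 1\<^sub>m n $$ (i,j)"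
      using i j by simp
    finally show "(transpose_mat ?H * ?H) $$ (i,j) = 1\<^sub>m n $$ (i,j)" .
  qed (use H in auto)
  thus ?thesis unfolding orthonormal_mat_def using H by blast
qed

lemma householder_mat_col_0:
  assumes v: "v \<in> carrier_vec n" and vv: "v \<bullet> v = 1" and n: "0 < n"
  shows "col (householder_mat n (v - unit_vec n 0)) 0 = v"
proof -
  define w where "w = v - unit_vec n 0"
  have w: "w \<in> carrier_vec n" unfolding w_def using v by simp
  have w0: "w $ 0 = v $ 0 - 1" unfolding w_def using v n by simp
  have "w \<bullet> w = v \<bullet> v - 2 * v $ 0 + 1"
    unfolding w_def using v n
    by (simp add: minus_scalar_prod_distrib scalar_prod_minus_distrib)
  hence ww: "w \<bullet> w = - 2 * w $ 0" using vv w0 by simp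
  have reflect: "2 / (w \<bullet> w) * w $ i * w $ 0 = - w $ i" if "i < n" for i
  proof (cases "w \<bullet> w = 0")
    case True
    hence "w = 0\<^sub>v n" using scalar_prod_self_pos[OF w] by fastforce
    thus ?thesis using that by simp
  next
    case False
    thus ?thesis unfolding ww by (simp add: field_simps)
  qed
  show ?thesis
    unfolding w_def[symmetric]
  proof (rule eq_vecI)
    fix i assume "i < dim_vec v"
    hence i: "i < n" using v by simp
    have "col (householder_mat n w) 0 $ i = (if i = 0 then 1 else 0) + w $ i"
      unfolding householder_mat_def using i n reflect[OF i] by simp
    also have "\<dots> = v $ i" unfolding w_def using v i by simp
    finally show "col (householder_mat n w) 0 $ i = v $ i" .
  qed (use v in \<open>simp add: householder_mat_def\<close>)
qed

lemma four_block_diag_congruence: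
  assumes A: "A \<in> carrier_mat n1 n1" and B: "B \<in> carrier_mat n2 n2"
    and P: "P \<in> carrier_mat n1 n1" and Q: "Q \<in> carrier_mat n2 n2"
  shows "transpose_mat (four_block_mat P (0\<^sub>m n1 n2) (0\<^sub>m n2 n1) Q)
      * four_block_mat A (0\<^sub>m n1 n2) (0\<^sub>m n2 n1) B * four_block_mat P (0\<^sub>m n1 n2) (0\<^sub>m n2 n1) Q
    = four_block_mat (transpose_mat P * A * P) (0\<^sub>m n1 n2) (0\<^sub>m n2 n1) (transpose_mat Q * B * Q)"
proof -
  have PT: "transpose_mat P \<in> carrier_mat n1 n1" and QT: "transpose_mat Q \<in> carrier_mat n2 n2"
    using P Q by auto
  show ?thesis
    unfolding transpose_four_block_mat[OF P zero_carrier_mat zero_carrier_mat Q]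
    using A B P Q PT QT
    by (simp add: mult_four_block_mat[OF PT zero_carrier_mat zero_carrier_mat QT A zero_carrier_mat zero_carrier_mat B]
        mult_four_block_mat[OF mult_carrier_mat[OF PT A] zero_carrier_mat zero_carrier_mat mult_carrier_mat[OF QT B]
          P zero_carrier_mat zero_carrier_mat Q])
qed

lemma four_block_mat_diag:
  "four_block_mat (mat 1 1 (\<lambda>_. e)) (0\<^sub>m 1 k) (0\<^sub>m k 1) (mat_diag k d)
    = mat_diag (Suc k) (case_nat e d)"
  by (rule eq_matI) (auto simp: mat_diag_def split: nat.split)

lemma symmetric_mat_first_col_split:
  fixes A :: "real mat"
  assumes A: "A \<in> carrier_mat (Suc k) (Suc k)" and A_sym: "transpose_mat A = A"
    and col_A: "col A 0 = e \<cdot>\<^sub>v unit_vec (Suc k) 0"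
  obtains M' where "M' \<in> carrier_mat k k" "transpose_mat M' = M'"
    "A = four_block_mat (mat 1 1 (\<lambda>_. e)) (0\<^sub>m 1 k) (0\<^sub>m k 1) M'"
proof -
  have A_col0: "A $$ (i, 0) = (if i = 0 then e else 0)" if "i < Suc k" for i
    using arg_cong[OF col_A, of "\<lambda>v. v $ i"] that A by (auto simp: unit_vec_def)
  have A_row0: "A $$ (0, j) = (if j = 0 then e else 0)" if "j < Suc k" for j
    using A_col0[OF that] arg_cong[OF A_sym, of "\<lambda>B. B $$ (j, 0)"] that A by simp
  define M' where "M' = mat k k (\<lambda>(i,j). A $$ (Suc i, Suc j))"
  have "transpose_mat M' = M'"
  proof (rule eq_matI)
    fix i j assume "i < dim_row M'" "j < dim_col M'"
    hence "i < k" "j < k" by (auto simp: M'_def)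
    thus "transpose_mat M' $$ (i, j) = M' $$ (i, j)"
      using arg_cong[OF A_sym, of "\<lambda>B. B $$ (Suc j, Suc i)"] A by (simp add: M'_def)
  qed (auto simp: M'_def)
  moreover have "A = four_block_mat (mat 1 1 (\<lambda>_. e)) (0\<^sub>m 1 k) (0\<^sub>m k 1) M'"
  proof (rule eq_matI)
    fix i j assume "i < dim_row (four_block_mat (mat 1 1 (\<lambda>_. e)) (0\<^sub>m 1 k) (0\<^sub>m k 1) M')"
      "j < dim_col (four_block_mat (mat 1 1 (\<lambda>_. e)) (0\<^sub>m 1 k) (0\<^sub>m k 1) M')"
    hence i: "i < Suc k" and j: "j < Suc k" by (auto simp: M'_def)
    show "A $$ (i, j) = four_block_mat (mat 1 1 (\<lambda>_. e)) (0\<^sub>m 1 k) (0\<^sub>m k 1) M' $$ (i, j)"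
    proof (cases "i = 0 \<or> j = 0")
      case True
      thus ?thesis using A_col0[OF i] A_row0[OF j] i j by (auto simp: M'_def)
    next
      case False
      then obtain i' j' where "i = Suc i'" "j = Suc j'" by (metis not0_implies_Suc)
      thus ?thesis using i j by (simp add: M'_def)
    qed
  qed (use A in \<open>auto simp: M'_def\<close>)
  ultimately show ?thesis
    using that[of M'] unfolding M'_def by auto
qed

lemma symmetric_mat_deflation:
  fixes M :: "real mat"
  assumes M: "M \<in> carrier_mat (Suc k) (Suc k)" and sym: "transpose_mat M = M"
    and H: "orthonormal_mat (Suc k) H" and ev: "M *\<^sub>v col H 0 = e \<cdot>\<^sub>v col H 0"
  obtains M' where "M' \<in> carrier_mat k k" "transpose_mat M' = M'"
    "transpose_mat H * M * H = four_block_mat (mat 1 1 (\<lambda>_. e)) (0\<^sub>m 1 k) (0\<^sub>m k 1) M'"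
proof (rule symmetric_mat_first_col_split)
  note H' = orthonormal_matD[OF H]
  have HT: "transpose_mat H \<in> carrier_mat (Suc k) (Suc k)" using H' by simp
  show "transpose_mat H * M * H \<in> carrier_mat (Suc k) (Suc k)" using H' M by simp
  have "transpose_mat (transpose_mat H * M * H) = transpose_mat H * transpose_mat (transpose_mat H * M)"
    using HT M H' by (intro transpose_mult) auto
  also have "transpose_mat (transpose_mat H * M) = M * H"
    using transpose_mult[OF HT M] sym by simp
  finally show "transpose_mat (transpose_mat H * M * H) = transpose_mat H * M * H"
    using HT M H' by (simp add: assoc_mult_mat[of _ "Suc k" "Suc k" _ "Suc k" _ "Suc k"])
  have cH: "col H 0 \<in> carrier_vec (Suc k)" using H' col_dim[of H 0] by simp
  have "col (transpose_mat H * M * H) 0 = (transpose_mat H * M) *\<^sub>v col H 0"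
    by (rule col_mult2) (use HT M H' in auto)
  also have "\<dots> = transpose_mat H *\<^sub>v (M *\<^sub>v col H 0)"
    by (rule assoc_mult_mat_vec[OF HT M cH])
  also have "\<dots> = e \<cdot>\<^sub>v (transpose_mat H *\<^sub>v col H 0)"
    unfolding ev by (rule mult_mat_vec[OF HT cH])
  also have "transpose_mat H *\<^sub>v col H 0 = col (transpose_mat H * H) 0"
    by (rule col_mult2[symmetric]) (use HT H' in auto)
  also have "\<dots> = unit_vec (Suc k) 0"
    using H' by simp
  finally show "col (transpose_mat H * M * H) 0 = e \<cdot>\<^sub>v unit_vec (Suc k) 0" .
qed (rule that)

theorem symmetric_mat_orthogonal_diagonalization:
  fixes M :: "real mat"
  assumes "M \<in> carrier_mat n n" and "transpose_mat M = M"
  obtains U d where "orthonormal_mat n U" "transpose_mat U * M * U = mat_diag n d"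
  using assms
proof (induction n arbitrary: M thesis)
  case 0
  show ?case
  proof (rule "0.prems"(1))
    show "orthonormal_mat 0 (1\<^sub>m 0)" by (simp add: orthonormal_mat_def)
    show "transpose_mat (1\<^sub>m 0) * M * 1\<^sub>m 0 = mat_diag 0 (\<lambda>_. 0)"
      using "0.prems"(2) by (intro eq_matI) (auto simp: mat_diag_def)
  qed
next
  case (Suc k)
  obtain e v where v: "v \<in> carrier_vec (Suc k)" "v \<bullet> v = 1" and ev: "M *\<^sub>v v = e \<cdot>\<^sub>v v"
    using symmetric_mat_unit_eigenvector[OF Suc.prems(2,3)] by blast
  define H where "H = householder_mat (Suc k) (v - unit_vec (Suc k) 0)"
  have H: "orthonormal_mat (Suc k) H"
    unfolding H_def using v by (intro householder_mat_orthonormal) simp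
  have "col H 0 = v"
    unfolding H_def using v by (intro householder_mat_col_0) auto
  then obtain M' where M': "M' \<in> carrier_mat k k" "transpose_mat M' = M'"
    and HMH: "transpose_mat H * M * H = four_block_mat (mat 1 1 (\<lambda>_. e)) (0\<^sub>m 1 k) (0\<^sub>m k 1) M'"
    using symmetric_mat_deflation[OF Suc.prems(2,3) H] ev by metis
  obtain U' d where U': "orthonormal_mat k U'" and D': "transpose_mat U' * M' * U' = mat_diag k d"
    using Suc.IH[OF _ M'] by blast
  define V where "V = four_block_mat (1\<^sub>m 1) (0\<^sub>m 1 k) (0\<^sub>m k 1) U'"
  note U'' = orthonormal_matD[OF U']
  have V: "orthonormal_mat (Suc k) V"
    using four_block_diag_congruence[OF one_carrier_mat one_carrier_mat one_carrier_mat U''(1)] U''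
    unfolding orthonormal_mat_def V_def by auto
  have "transpose_mat V * (transpose_mat H * M * H) * V = mat_diag (Suc k) (case_nat e d)"
    unfolding HMH V_def four_block_diag_congruence[OF mat_carrier M'(1) one_carrier_mat U''(1)] D'
    using four_block_mat_diag[of e k d] by simp
  hence "transpose_mat (H * V) * M * (H * V) = mat_diag (Suc k) (case_nat e d)"
    using orthonormal_matD(1)[OF H] orthonormal_matD(1)[OF V] Suc.prems(2)
    by (simp add: transpose_mult assoc_mult_mat[of _ "Suc k" "Suc k" _ "Suc k" _ "Suc k"])
  thus ?case
    using Suc.prems(1) orthonormal_mat_mult[OF H V] by blast
qed

section \<open>The nuclear norm as dual of the operator norm\<close>

lemma char_poly_mat_diag: "char_poly (mat_diag n d) = (\<Prod>i<n. [:- d i, 1:])"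
proof -
  have "char_poly (mat_diag n d) = (\<Prod>a\<leftarrow>diag_mat (mat_diag n d). [:- a, 1:])"
    by (rule char_poly_upper_triangular[OF mat_diag_dim]) (auto simp: mat_diag_def)
  also have "diag_mat (mat_diag n d) = map d [0..<n]"
    by (simp add: diag_mat_def mat_diag_def)
  finally show ?thesis
    by (simp add: prod.distinct_set_conv_list[symmetric] atLeast0LessThan comp_def)
qed

lemma order_prod:
  assumes "finite I" and "\<And>i. i \<in> I \<Longrightarrow> f i \<noteq> 0"
  shows "order x (\<Prod>i\<in>I. f i) = (\<Sum>i\<in>I. order x (f i))"
  using assms by (induction I rule: finite_induct) (simp_all add: order_mult order_1)

lemma sum_roots_order_prod_linear:
  fixes n :: nat and d :: "nat \<Rightarrow> 'a :: idom" and f :: "'a \<Rightarrow> 'b :: comm_semiring_1"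
  defines "p \<equiv> \<Prod>i<n. [:- d i, 1:]"
  shows "(\<Sum>x\<in>{x. poly p x = 0}. of_nat (order x p) * f x) = (\<Sum>i<n. f (d i))"
proof -
  have roots: "{x. poly p x = 0} = d ` {..<n}"
    unfolding p_def by (auto simp: poly_prod)
  have order: "order x p = (\<Sum>i<n. if d i = x then 1 else 0)" for x
    unfolding p_def by (subst order_prod) (auto simp: order_linear' intro!: sum.cong)
  have "(\<Sum>x\<in>{x. poly p x = 0}. of_nat (order x p) * f x)
      = (\<Sum>x\<in>d ` {..<n}. \<Sum>i<n. if d i = x then f x else 0)"
    unfolding roots order by (simp add: sum_distrib_right) (auto intro!: sum.cong)
  also have "\<dots> = (\<Sum>i<n. \<Sum>x\<in>d ` {..<n}. if d i = x then f x else 0)"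
    by (rule sum.swap)
  also have "\<dots> = (\<Sum>i<n. f (d i))"
    by simp
  finally show ?thesis .
qed

lemma transpose_mat_diag: "transpose_mat (mat_diag n d) = mat_diag n d"
  by (rule eq_matI) (auto simp: mat_diag_def)

lemma mat_diag_mult_vec:
  "z \<in> carrier_vec n \<Longrightarrow> mat_diag n d *\<^sub>v z = vec n (\<lambda>j. d j * z $ j)"
proof (rule eq_vecI, simp_all add: mat_diag_def scalar_prod_def)
  fix i assume "i < n"
  thus "(\<Sum>j = 0..<n. (if i = j then d j else 0) * z $ j) = d i * z $ i"
    by (subst sum.remove[of _ i]) auto
qed

lemma gram_mat_mult_right:
  fixes A U :: "real mat"
  assumes "A \<in> carrier_mat m n" and "U \<in> carrier_mat n n"
  shows "transpose_mat (A * U) * (A * U) = transpose_mat U * (transpose_mat A * A) * U"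
  using assms
  by (simp add: transpose_mult[of _ m n _ n] assoc_mult_mat[of _ n m _ n _ n]
      assoc_mult_mat[of _ n n _ m _ n] assoc_mult_mat[of _ n n _ n _ n])

lemma nuclear_norm_gram_mat_diag:
  assumes A: "A \<in> carrier_mat m n" and U: "orthonormal_mat n U"
    and D: "transpose_mat (A * U) * (A * U) = mat_diag n d"
  shows "nuclear_norm A = (\<Sum>j<n. sqrt (d j))"
proof -
  note U' = orthonormal_matD[OF U]
  have AA: "transpose_mat A * A \<in> carrier_mat n n" using A by simp
  have UT: "transpose_mat U \<in> carrier_mat n n" using U' by simp
  have "transpose_mat A * A = (U * transpose_mat U) * (transpose_mat A * A) * (U * transpose_mat U)"
    unfolding U'(3) by (simp only: left_mult_one_mat[OF AA] right_mult_one_mat[OF AA])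
  also have "\<dots> = U * (transpose_mat (A * U) * (A * U)) * transpose_mat U"
    unfolding gram_mat_mult_right[OF A U'(1)] using U'(1) UT AA
    by (simp add: assoc_mult_mat[of _ n n _ n _ n])
  finally have "transpose_mat A * A = U * mat_diag n d * transpose_mat U"
    unfolding D .
  hence "similar_mat (transpose_mat A * A) (mat_diag n d)"
    unfolding similar_mat_def similar_mat_wit_def Let_def using AA U' UT
    by (intro exI[of _ U] exI[of _ "transpose_mat U"]) auto
  hence "char_poly (transpose_mat A * A) = (\<Prod>j<n. [:- d j, 1:])"
    by (simp add: char_poly_similar char_poly_mat_diag)
  thus ?thesis
    unfolding nuclear_norm_def Let_def by (simp add: sum_roots_order_prod_linear)
qed

lemma col_scalar_prod_gram_mat_diag:
  assumes "B \<in> carrier_mat m n" and "transpose_mat B * B = mat_diag n d" and "i < n" and "j < n"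
  shows "col B i \<bullet> col B j = (if i = j then d j else 0)"
proof -
  have "col B i \<bullet> col B j = (transpose_mat B * B) $$ (i, j)"
    using assms(1,3,4) by simp
  thus ?thesis unfolding assms(2) using assms(3,4) by (simp add: mat_diag_def)
qed

lemma gram_mat_diag_quadratic_form:
  fixes B :: "real mat"
  assumes B: "B \<in> carrier_mat m n" and D: "transpose_mat B * B = mat_diag n d"
    and z: "z \<in> carrier_vec n"
  shows "(B *\<^sub>v z) \<bullet> (B *\<^sub>v z) = (\<Sum>j<n. d j * (z $ j)\<^sup>2)"
proof -
  have "(B *\<^sub>v z) \<bullet> (B *\<^sub>v z) = (transpose_mat B *\<^sub>v (B *\<^sub>v z)) \<bullet> z"
    using transpose_vec_mult_scalar[OF B z, of "B *\<^sub>v z"] B z by simp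
  also have "transpose_mat B *\<^sub>v (B *\<^sub>v z) = mat_diag n d *\<^sub>v z"
    unfolding D[symmetric] using B z by (simp add: assoc_mult_mat_vec[of _ n m _ n])
  also have "mat_diag n d *\<^sub>v z = vec n (\<lambda>j. d j * z $ j)"
    by (rule mat_diag_mult_vec[OF z])
  also have "vec n (\<lambda>j. d j * z $ j) \<bullet> z = (\<Sum>j<n. d j * (z $ j)\<^sup>2)"
    using z by (simp add: scalar_prod_def power2_eq_square mult.assoc atLeast0LessThan)
  finally show ?thesis .
qed

lemma gram_mat_diag_contraction_mat:
  fixes B :: "real mat"
  assumes B: "B \<in> carrier_mat m n" and D: "transpose_mat B * B = mat_diag n d"
    and d: "\<And>j. j < n \<Longrightarrow> d j \<le> 1"
  shows "contraction_mat B"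
  unfolding contraction_mat_def
proof
  fix z :: "real vec" assume "z \<in> carrier_vec (dim_col B)"
  hence z: "z \<in> carrier_vec n" using B by simp
  have "(B *\<^sub>v z) \<bullet> (B *\<^sub>v z) = (\<Sum>j<n. d j * (z $ j)\<^sup>2)"
    by (rule gram_mat_diag_quadratic_form[OF B D z])
  also have "\<dots> \<le> (\<Sum>j<n. (z $ j)\<^sup>2)"
  proof (rule sum_mono)
    fix j assume "j \<in> {..<n}"
    thus "d j * (z $ j)\<^sup>2 \<le> (z $ j)\<^sup>2"
      using mult_right_mono[OF d, of j "(z $ j)\<^sup>2"] by simp
  qed
  also have "\<dots> = z \<bullet> z"
    using z by (simp add: scalar_prod_def power2_eq_square atLeast0LessThan)
  finally show "(B *\<^sub>v z) \<bullet> (B *\<^sub>v z) \<le> z \<bullet> z" .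
qed

lemma isometry_contraction_mat:
  fixes Y :: "real mat"
  assumes "Y \<in> carrier_mat q n" and "transpose_mat Y * Y = 1\<^sub>m n"
  shows "contraction_mat Y"
  using gram_mat_diag_contraction_mat[of Y q n "\<lambda>_. 1"] assms by simp

lemma gram_orthogonal_diagonalization:
  fixes A :: "real mat"
  assumes A: "A \<in> carrier_mat m n"
  obtains U d where "orthonormal_mat n U" "transpose_mat (A * U) * (A * U) = mat_diag n d"
proof -
  have AA: "transpose_mat A * A \<in> carrier_mat n n" using A by simp
  have "transpose_mat (transpose_mat A * A) = transpose_mat A * A"
    using A by (simp add: transpose_mult[of _ n m _ n])
  then obtain U d where U: "orthonormal_mat n U"
    and D: "transpose_mat U * (transpose_mat A * A) * U = mat_diag n d"
    using symmetric_mat_orthogonal_diagonalization[OF AA] by blast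
  thus ?thesis
    using that U D gram_mat_mult_right[OF A orthonormal_matD(1)[OF U]] by simp
qed

definition mat_inner :: "real mat \<Rightarrow> real mat \<Rightarrow> real" where
  "mat_inner W A = (\<Sum>i<dim_row A. \<Sum>j<dim_col A. W $$ (i,j) * A $$ (i,j))"

lemma mat_inner_cols:
  assumes "W \<in> carrier_mat m n" and "A \<in> carrier_mat m n"
  shows "mat_inner W A = (\<Sum>j<n. col W j \<bullet> col A j)"
  unfolding mat_inner_def using assms
  by (subst sum.swap) (auto simp: scalar_prod_def atLeast0LessThan intro!: sum.cong)

lemma mat_inner_add_right:
  assumes "A \<in> carrier_mat m n" and "B \<in> carrier_mat m n"
  shows "mat_inner W (A + B) = mat_inner W A + mat_inner W B"
  unfolding mat_inner_def using assms by (simp add: sum.distrib distrib_left)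

lemma mat_inner_smult_right: "mat_inner W (c \<cdot>\<^sub>m A) = c * mat_inner W A"
  unfolding mat_inner_def by (simp add: sum_distrib_left ac_simps)

lemma mat_inner_mult_right:
  assumes W: "W \<in> carrier_mat m n" and A: "A \<in> carrier_mat m k" and Y: "Y \<in> carrier_mat k n"
  shows "mat_inner W (A * Y) = mat_inner (W * transpose_mat Y) A"
proof -
  have "mat_inner W (A * Y) = (\<Sum>i<m. \<Sum>j<n. \<Sum>l<k. W $$ (i,j) * (A $$ (i,l) * Y $$ (l,j)))"
    unfolding mat_inner_def using W A Y by (simp add: scalar_prod_def sum_distrib_left atLeast0LessThan)
  also have "\<dots> = (\<Sum>i<m. \<Sum>l<k. \<Sum>j<n. W $$ (i,j) * (A $$ (i,l) * Y $$ (l,j)))"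
    by (intro sum.cong refl sum.swap)
  also have "\<dots> = mat_inner (W * transpose_mat Y) A"
    unfolding mat_inner_def using W A Y
    by (auto simp: scalar_prod_def sum_distrib_left sum_distrib_right atLeast0LessThan ac_simps
        intro!: sum.cong)
  finally show ?thesis .
qed

lemma mat_inner_orthonormal_mult:
  assumes U: "orthonormal_mat n U" and W: "W \<in> carrier_mat m n" and A: "A \<in> carrier_mat m n"
  shows "mat_inner (W * U) (A * U) = mat_inner W A"
proof -
  note U' = orthonormal_matD[OF U]
  have "mat_inner (W * U) (A * U) = mat_inner (W * U * transpose_mat U) A"
    using W A U' by (intro mat_inner_mult_right) auto
  also have "W * U * transpose_mat U = W"
    using W U' by (simp add: assoc_mult_mat[of _ m n _ n _ n])
  finally show ?thesis .
qed

lemma contraction_mat_scalar_prod_le: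
  assumes W: "W \<in> carrier_mat m n" and c: "contraction_mat W"
    and u: "u \<in> carrier_vec n" "u \<bullet> u = 1" and y: "y \<in> carrier_vec m"
  shows "(W *\<^sub>v u) \<bullet> y \<le> sqrt (y \<bullet> y)"
proof -
  have "(W *\<^sub>v u) \<bullet> y \<le> sqrt ((W *\<^sub>v u) \<bullet> (W *\<^sub>v u)) * sqrt (y \<bullet> y)"
    using W u y by (intro scalar_prod_cauchy_schwarz[of _ m]) auto
  also have "\<dots> \<le> sqrt (y \<bullet> y)"
    using contraction_matD[OF c, of u] W u
    by (intro mult_left_le_one_le) (simp_all add: scalar_prod_self_nonneg)
  finally show ?thesis .
qed

lemma mat_inner_le_nuclear_norm:
  assumes A: "A \<in> carrier_mat m n" and W: "W \<in> carrier_mat m n" and c: "contraction_mat W"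
  shows "mat_inner W A \<le> nuclear_norm A"
proof -
  obtain U d where U: "orthonormal_mat n U" and D: "transpose_mat (A * U) * (A * U) = mat_diag n d"
    using gram_orthogonal_diagonalization[OF A] by blast
  note U' = orthonormal_matD[OF U]
  have AU: "A * U \<in> carrier_mat m n" using A U' by simp
  have "mat_inner W A = mat_inner (W * U) (A * U)"
    by (rule mat_inner_orthonormal_mult[OF U W A, symmetric])
  also have "\<dots> = (\<Sum>j<n. col (W * U) j \<bullet> col (A * U) j)"
    by (rule mat_inner_cols) (use W U' AU in auto)
  also have "\<dots> = (\<Sum>j<n. (W *\<^sub>v col U j) \<bullet> col (A * U) j)"
    using col_mult2[OF W U'(1)] by simp
  also have "\<dots> \<le> (\<Sum>j<n. sqrt (d j))"
  proof (rule sum_mono)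
    fix j assume "j \<in> {..<n}"
    hence j: "j < n" by simp
    have "(W *\<^sub>v col U j) \<bullet> col (A * U) j \<le> sqrt (col (A * U) j \<bullet> col (A * U) j)"
      using contraction_mat_scalar_prod_le[OF W c] col_scalar_prod_gram_mat_diag[of U n n "\<lambda>_. 1" j j]
        U' j AU col_dim[of U j] col_dim[of "A * U" j] by simp
    thus "(W *\<^sub>v col U j) \<bullet> col (A * U) j \<le> sqrt (d j)"
      using col_scalar_prod_gram_mat_diag[OF AU D j j] by simp
  qed
  also have "\<dots> = nuclear_norm A"
    using nuclear_norm_gram_mat_diag[OF A U D] by simp
  finally show ?thesis .
qed

lemma gram_mat_mult_mat_diag:
  fixes B :: "real mat"
  assumes B: "B \<in> carrier_mat m n" and D: "transpose_mat B * B = mat_diag n d"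
  shows "transpose_mat (B * mat_diag n c) * (B * mat_diag n c) = mat_diag n (\<lambda>j. c j * d j * c j)"
proof -
  have "transpose_mat (B * mat_diag n c) * (B * mat_diag n c) = mat_diag n c * (transpose_mat B * B) * mat_diag n c"
    using B by (simp add: transpose_mult[OF B mat_diag_dim] transpose_mat_diag
        assoc_mult_mat[of _ n n _ m _ n] assoc_mult_mat[of _ n m _ n _ n] assoc_mult_mat[of _ n n _ n _ n])
  thus ?thesis unfolding D by simp
qed

lemma mat_inner_mult_mat_diag:
  assumes B: "B \<in> carrier_mat m n"
  shows "mat_inner (B * mat_diag n c) B = (\<Sum>j<n. c j * (col B j \<bullet> col B j))"
proof -
  have "col (B * mat_diag n c) j = c j \<cdot>\<^sub>v col B j" if "j < n" for j
    unfolding mat_diag_mult_right[OF B] using B that by (intro eq_vecI) auto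
  thus ?thesis
    using B by (simp add: mat_inner_cols[of _ m n] smult_scalar_prod_distrib[of _ m])
qed

lemma nuclear_norm_attained:
  assumes A: "A \<in> carrier_mat m n"
  obtains W where "W \<in> carrier_mat m n" "contraction_mat W" "mat_inner W A = nuclear_norm A"
proof -
  obtain U d where U: "orthonormal_mat n U" and D: "transpose_mat (A * U) * (A * U) = mat_diag n d"
    using gram_orthogonal_diagonalization[OF A] by blast
  note U' = orthonormal_matD[OF U]
  define B where "B = A * U"
  have B: "B \<in> carrier_mat m n" unfolding B_def using A U' by simp
  have d: "d j = col B j \<bullet> col B j" if "j < n" for j
    using col_scalar_prod_gram_mat_diag[OF B D[folded B_def] that that] by simp
  \<comment> \<open>thanks to the junk value \<open>1 / 0 = 0\<close>, \<open>cd\<close> also holds where \<open>d j = 0\<close>\<close>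
  define c where "c j = 1 / sqrt (d j)" for j
  have cd: "c j * d j = sqrt (d j)" if "j < n" for j
    unfolding c_def using d[OF that] scalar_prod_self_nonneg[of "col B j"] by (simp add: real_div_sqrt)
  have cdc: "c j * d j * c j \<le> 1" if "j < n" for j
    unfolding cd[OF that] c_def by (cases "d j = 0") simp_all
  define W where "W = B * mat_diag n c * transpose_mat U"
  have BC: "B * mat_diag n c \<in> carrier_mat m n" using B by simp
  have UT: "transpose_mat U \<in> carrier_mat n n" using U' by simp
  have W: "W \<in> carrier_mat m n" unfolding W_def using BC UT by simp
  have "contraction_mat (B * mat_diag n c)"
    using gram_mat_diag_contraction_mat[OF BC gram_mat_mult_mat_diag[OF B D[folded B_def]] cdc] .
  moreover have "contraction_mat (transpose_mat U)"
    using isometry_contraction_mat[OF UT] U' by simp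
  ultimately have "contraction_mat W"
    unfolding W_def by (rule contraction_mat_mult[OF BC UT])
  have "W * U = B * mat_diag n c"
    unfolding W_def using BC UT U' by (simp add: assoc_mult_mat[of _ m n _ n _ n] right_mult_one_mat[OF BC])
  hence "mat_inner W A = mat_inner (B * mat_diag n c) B"
    using mat_inner_orthonormal_mult[OF U W A] unfolding B_def by simp
  also have "\<dots> = (\<Sum>j<n. c j * d j)"
    using mat_inner_mult_mat_diag[OF B] d by simp
  also have "\<dots> = nuclear_norm A"
    using nuclear_norm_gram_mat_diag[OF A U D] cd by simp
  finally show ?thesis
    using that W \<open>contraction_mat W\<close> by blast
qed

lemma nuclear_norm_sublinear:
  assumes A: "A \<in> carrier_mat m n" and B: "B \<in> carrier_mat m n" and "0 \<le> a" and "0 \<le> b"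
  shows "nuclear_norm (a \<cdot>\<^sub>m A + b \<cdot>\<^sub>m B) \<le> a * nuclear_norm A + b * nuclear_norm B"
proof -
  have AB: "a \<cdot>\<^sub>m A + b \<cdot>\<^sub>m B \<in> carrier_mat m n" using A B by simp
  obtain W where W: "W \<in> carrier_mat m n" "contraction_mat W"
    and attained: "mat_inner W (a \<cdot>\<^sub>m A + b \<cdot>\<^sub>m B) = nuclear_norm (a \<cdot>\<^sub>m A + b \<cdot>\<^sub>m B)"
    using nuclear_norm_attained[OF AB] by blast
  have "nuclear_norm (a \<cdot>\<^sub>m A + b \<cdot>\<^sub>m B) = a * mat_inner W A + b * mat_inner W B"
    using attained A B by (simp add: mat_inner_add_right[of _ m n] mat_inner_smult_right)
  also have "\<dots> \<le> a * nuclear_norm A + b * nuclear_norm B"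
    using mat_inner_le_nuclear_norm[OF A W] mat_inner_le_nuclear_norm[OF B W] assms(3,4)
    by (intro add_mono mult_left_mono)
  finally show ?thesis .
qed

lemma nuclear_norm_mult_contraction_le:
  assumes A: "A \<in> carrier_mat m k" and Y: "Y \<in> carrier_mat k n" and c: "contraction_mat Y"
  shows "nuclear_norm (A * Y) \<le> nuclear_norm A"
proof -
  have AY: "A * Y \<in> carrier_mat m n" using A Y by simp
  obtain W where W: "W \<in> carrier_mat m n" "contraction_mat W"
    and attained: "mat_inner W (A * Y) = nuclear_norm (A * Y)"
    using nuclear_norm_attained[OF AY] by blast
  have YT: "transpose_mat Y \<in> carrier_mat n k" using Y by simp
  have "contraction_mat (W * transpose_mat Y)"
    using contraction_mat_mult[OF W(1) YT W(2) contraction_mat_transpose[OF Y c]] .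
  hence "mat_inner (W * transpose_mat Y) A \<le> nuclear_norm A"
    using W YT A by (intro mat_inner_le_nuclear_norm) auto
  thus ?thesis
    using attained mat_inner_mult_right[OF W(1) A Y] by simp
qed

section \<open>The proximal problem\<close>

lemma frob_norm_sq: "(frob_norm A)\<^sup>2 = (\<Sum>i<dim_row A. \<Sum>j<dim_col A. (A $$ (i,j))\<^sup>2)"
  unfolding frob_norm_def by (simp add: sum_nonneg)

lemma frob_norm_eq_0_imp_eq:
  assumes A: "A \<in> carrier_mat m n" and B: "B \<in> carrier_mat m n" and "frob_norm (A - B) = 0"
  shows "A = B"
proof (rule eq_matI)
  have "(\<Sum>i<m. \<Sum>j<n. (A $$ (i,j) - B $$ (i,j))\<^sup>2) = 0"
    using frob_norm_sq[of "A - B"] assms by simp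
  hence "\<forall>i<m. \<forall>j<n. (A $$ (i,j) - B $$ (i,j))\<^sup>2 = 0"
    by (simp add: sum_nonneg_eq_0_iff sum_nonneg)
  thus "A $$ (i,j) = B $$ (i,j)" if "i < dim_row B" "j < dim_col B" for i j
    using that B by auto
qed (use A B in auto)

lemma frob_norm_midpoint_sq:
  assumes X: "X \<in> carrier_mat m n" and A: "A \<in> carrier_mat m n" and B: "B \<in> carrier_mat m n"
  shows "(frob_norm (X - ((1/2) \<cdot>\<^sub>m A + (1/2) \<cdot>\<^sub>m B)))\<^sup>2
    = (1/2) * (frob_norm (X - A))\<^sup>2 + (1/2) * (frob_norm (X - B))\<^sup>2 - (1/4) * (frob_norm (A - B))\<^sup>2"
proof -
  have "(frob_norm (X - ((1/2) \<cdot>\<^sub>m A + (1/2) \<cdot>\<^sub>m B)))\<^sup>2 = (\<Sum>i<m. \<Sum>j<n.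
      (1/2) * (X $$ (i,j) - A $$ (i,j))\<^sup>2 + (1/2) * (X $$ (i,j) - B $$ (i,j))\<^sup>2
      - (1/4) * (A $$ (i,j) - B $$ (i,j))\<^sup>2)"
    unfolding frob_norm_sq using X A B
    by (intro sum.cong refl) (auto simp: power2_eq_square field_simps)
  also have "\<dots> = (1/2) * (frob_norm (X - A))\<^sup>2 + (1/2) * (frob_norm (X - B))\<^sup>2
      - (1/4) * (frob_norm (A - B))\<^sup>2"
    unfolding frob_norm_sq using X A B by (simp add: sum.distrib sum_subtractf sum_distrib_left)
  finally show ?thesis .
qed

definition nuclear_prox_objective :: "real \<Rightarrow> real mat \<Rightarrow> real mat \<Rightarrow> real" where
  "nuclear_prox_objective lam X S = (1/2) * (frob_norm (X - S))\<^sup>2 + lam * nuclear_norm S"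

lemma nuclear_prox_objective_midpoint:
  assumes X: "X \<in> carrier_mat m n" and A: "A \<in> carrier_mat m n" and B: "B \<in> carrier_mat m n"
    and lam: "0 \<le> lam"
  shows "nuclear_prox_objective lam X ((1/2) \<cdot>\<^sub>m A + (1/2) \<cdot>\<^sub>m B)
    \<le> (1/2) * nuclear_prox_objective lam X A + (1/2) * nuclear_prox_objective lam X B
      - (1/8) * (frob_norm (A - B))\<^sup>2"
proof -
  have "lam * nuclear_norm ((1/2) \<cdot>\<^sub>m A + (1/2) \<cdot>\<^sub>m B)
      \<le> lam * ((1/2) * nuclear_norm A + (1/2) * nuclear_norm B)"
    using nuclear_norm_sublinear[OF A B, of "1/2" "1/2"] lam by (simp add: mult_left_mono)
  thus ?thesis
    unfolding nuclear_prox_objective_def frob_norm_midpoint_sq[OF X A B] by (simp add: algebra_simps)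
qed

lemma nuclear_prox_minimizer_unique:
  assumes X: "X \<in> carrier_mat m n" and lam: "0 \<le> lam"
    and S1: "S1 \<in> carrier_mat m n" and S2: "S2 \<in> carrier_mat m n"
    and min1: "\<And>S. S \<in> carrier_mat m n \<Longrightarrow>
      nuclear_prox_objective lam X S1 \<le> nuclear_prox_objective lam X S"
    and min2: "\<And>S. S \<in> carrier_mat m n \<Longrightarrow>
      nuclear_prox_objective lam X S2 \<le> nuclear_prox_objective lam X S"
  shows "S1 = S2"
proof -
  let ?M = "(1/2) \<cdot>\<^sub>m S1 + (1/2) \<cdot>\<^sub>m S2"
  have M: "?M \<in> carrier_mat m n" using S1 S2 by simp
  have "(1/8) * (frob_norm (S1 - S2))\<^sup>2 \<le> 0"
    using nuclear_prox_objective_midpoint[OF X S1 S2 lam] min1[OF M] min2[OF M] by linarith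
  hence "frob_norm (S1 - S2) = 0" by simp
  thus ?thesis by (rule frob_norm_eq_0_imp_eq[OF S1 S2])
qed

lemma nuclear_prox_minimizer_factor:
  fixes Y :: "real mat"
  assumes Y: "Y \<in> carrier_mat q n" and YY: "transpose_mat Y * Y = 1\<^sub>m n" and lam: "0 \<le> lam"
    and B: "B \<in> carrier_mat m q"
    and B_min: "\<forall>B' \<in> carrier_mat m q. (1/2) * (frob_norm (X - B * Y))\<^sup>2 + lam * nuclear_norm B
      \<le> (1/2) * (frob_norm (X - B' * Y))\<^sup>2 + lam * nuclear_norm B'"
    and S: "S \<in> carrier_mat m n"
  shows "nuclear_prox_objective lam X (B * Y) \<le> nuclear_prox_objective lam X S"
proof -
  have YT: "transpose_mat Y \<in> carrier_mat n q" using Y by simp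
  have Y_contr: "contraction_mat Y" and YT_contr: "contraction_mat (transpose_mat Y)"
    using isometry_contraction_mat[OF Y YY] contraction_mat_transpose[OF Y] by auto
  have "nuclear_prox_objective lam X (B * Y) \<le> (1/2) * (frob_norm (X - B * Y))\<^sup>2 + lam * nuclear_norm B"
    unfolding nuclear_prox_objective_def
    using nuclear_norm_mult_contraction_le[OF B Y Y_contr] lam
    by (simp add: mult_left_mono)
  also have "\<dots> \<le> (1/2) * (frob_norm (X - S * transpose_mat Y * Y))\<^sup>2
      + lam * nuclear_norm (S * transpose_mat Y)"
    by (rule bspec[OF B_min]) (use S YT in simp)
  also have "S * transpose_mat Y * Y = S"
    using S YT Y YY by (simp add: assoc_mult_mat[of _ m n _ q _ n])
  also have "lam * nuclear_norm (S * transpose_mat Y) \<le> lam * nuclear_norm S"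
    using nuclear_norm_mult_contraction_le[OF S YT YT_contr] lam
    by (simp add: mult_left_mono)
  finally show ?thesis
    unfolding nuclear_prox_objective_def by simp
qed

theorem proposition5:
  fixes X Y B_hat S_hat :: "real mat" and m n q :: nat and lam :: real
  assumes X: "X \<in> carrier_mat m n"
    and Y: "Y \<in> carrier_mat q n"
    and YY: "transpose_mat Y * Y = 1\<^sub>m n"
    and lam: "lam > 0"
    and B: "B_hat \<in> carrier_mat m q"
    and Bopt: "\<forall>B \<in> carrier_mat m q.
        (1/2) * (frob_norm (X - B_hat * Y))^2 + lam * nuclear_norm B_hat
        \<le> (1/2) * (frob_norm (X - B * Y))^2 + lam * nuclear_norm B"
    and S: "S_hat \<in> carrier_mat m n"
    and Sopt: "\<forall>S \<in> carrier_mat m n.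
        (1/2) * (frob_norm (X - S_hat))^2 + lam * nuclear_norm S_hat
        \<le> (1/2) * (frob_norm (X - S))^2 + lam * nuclear_norm S"
  shows "S_hat = B_hat * Y"
proof (rule nuclear_prox_minimizer_unique[OF X])
  show "0 \<le> lam" using lam by simp
  show "S_hat \<in> carrier_mat m n" by (rule S)
  show "B_hat * Y \<in> carrier_mat m n" using B Y by simp
  show "nuclear_prox_objective lam X S_hat \<le> nuclear_prox_objective lam X S"
    if "S \<in> carrier_mat m n" for S
    using Sopt that unfolding nuclear_prox_objective_def by simp
  show "nuclear_prox_objective lam X (B_hat * Y) \<le> nuclear_prox_objective lam X S"
    if "S \<in> carrier_mat m n" for S
    using nuclear_prox_minimizer_factor[OF Y YY _ B Bopt that] lam by simp
qed

end
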